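(* Let $0<\mu<L_{\max}^{-1}$ with $L_{\max}=\max_i\|A_i\|_2^2$, let $\{x^n\}$ be generated by GAITA (as in the context) from an arbitrary $x^0\in\mathbf{R}^N$, and suppose $\{x^n\}$ converges to $x^*$. Let $I=Supp(x^* )$ and $K=\|x^*\|_0=|I|$. If $$A_I^TA_I+\lambda q(q-1)\Lambda(x_I^* )\succ0,$$ then $x^*$ is a strict local minimizer of $T_\lambda$.
   Context: Let $A\in\mathbf{R}^{m\times N}$ have columns $A_1,\dots,A_N$, $y\in\mathbf{R}^m$, $\lambda>0$, $q\in(0,1)$, and $T_\lambda(x)=\frac12\|Ax-y\|_2^2+\lambda\sum_{i=1}^N|x_i|^q$. For a step size $\mu>0$ set $\tau_{\mu,q}=\frac{2-q}{2-2q}(2\lambda\mu(1-q))^{\frac{1}{2-q}}$ and $\eta_{\mu,q}=(2\lambda\mu(1-q))^{\frac{1}{2-q}}$. For $z\in\mathbf{R}$ let $prox_{\mu,\lambda|\cdot|^q}(z)=\arg\min_{v\in\mathbf{R}}\{\frac{(z-v)^2}{2\mu}+\lambda|v|^q\}$ (a single point when $|z|\neq\tau_{\mu,q}$). Define $\mathcal{T}(z,w)$ as the unique element of $prox_{\mu,\lambda|\cdot|^q}(z)$ if $|z|\neq\tau_{\mu,q}$, and, if $|z|=\tau_{\mu,q}$, as $sgn(z)\eta_{\mu,q}$ when $w\neq0$ and $0$ when $w=0$. GAITA: given $x^0\in\mathbf{R}^N$, for $n=0,1,2,\dots$ let $i=(n\bmod N)+1$, $z_i^n=x_i^n-\mu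 A_i^T(Ax^n-y)$, $x_i^{n+1}=\mathcal{T}(z_i^n,x_i^n)$, $x_j^{n+1}=x_j^n$ for $j\neq i$. $Supp(x)=\{i:x_i\neq0\}$. $A_I$ is the submatrix of $A$ with columns indexed by $I$, $x_I^*$ the subvector of $x^*$ indexed by $I$, $\Lambda(x_I^* )\in\mathbf{R}^{K\times K}$ the diagonal matrix with diagonal entries $|x_i^*|^{q-2}$, $i\in I$, and $M\succ0$ means $M$ is positive definite. *)

theory Defs
  imports "HOL-Analysis.Analysis"
begin

text \<open>Conventions: the matrix A in R^(m x N) is a function A :: nat => nat => real,
  entry (k,i) = A k i for k < m, i < N (0-based indices). Vectors in R^N / R^m are
  functions nat => real; only indices below N (resp. m) are meaningful.\<close>

definition Tlam :: "nat \<Rightarrow> nat \<Rightarrow> (nat \<Rightarrow> nat \<Rightarrow> real) \<Rightarrow> (nat \<Rightarrow> real) \<Rightarrow> real \<Rightarrow> real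
    \<Rightarrow> (nat \<Rightarrow> real) \<Rightarrow> real" where
  "Tlam m N A y lam q x =
     (1/2) * (\<Sum>k<m. ((\<Sum>j<N. A k j * x j) - y k)^2) + lam * (\<Sum>i<N. \<bar>x i\<bar> powr q)"

definition tau :: "real \<Rightarrow> real \<Rightarrow> real \<Rightarrow> real" where
  "tau mu lam q = (2 - q) / (2 - 2*q) * (2*lam*mu*(1-q)) powr (1/(2-q))"

definition eta :: "real \<Rightarrow> real \<Rightarrow> real \<Rightarrow> real" where
  "eta mu lam q = (2*lam*mu*(1-q)) powr (1/(2-q))"

definition prox :: "real \<Rightarrow> real \<Rightarrow> real \<Rightarrow> real \<Rightarrow> real set" where
  "prox mu lam q z = {v. \<forall>w. (z - v)^2 / (2*mu) + lam * \<bar>v\<bar> powr q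
                              \<le> (z - w)^2 / (2*mu) + lam * \<bar>w\<bar> powr q}"

definition Top :: "real \<Rightarrow> real \<Rightarrow> real \<Rightarrow> real \<Rightarrow> real \<Rightarrow> real" where
  "Top mu lam q z w =
     (if \<bar>z\<bar> \<noteq> tau mu lam q then (THE v. v \<in> prox mu lam q z)
      else if w \<noteq> 0 then sgn z * eta mu lam q else 0)"

primrec gaita :: "nat \<Rightarrow> nat \<Rightarrow> (nat \<Rightarrow> nat \<Rightarrow> real) \<Rightarrow> (nat \<Rightarrow> real) \<Rightarrow> real \<Rightarrow> real \<Rightarrow> real
    \<Rightarrow> (nat \<Rightarrow> real) \<Rightarrow> nat \<Rightarrow> (nat \<Rightarrow> real)" where
  "gaita m N A y mu lam q x0 0 = x0"
| "gaita m N A y mu lam q x0 (Suc n) =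
     (let x = gaita m N A y mu lam q x0 n; i = n mod N;
          z = x i - mu * (\<Sum>k<m. A k i * ((\<Sum>j<N. A k j * x j) - y k))
      in x(i := Top mu lam q z (x i)))"

definition Lmax :: "nat \<Rightarrow> nat \<Rightarrow> (nat \<Rightarrow> nat \<Rightarrow> real) \<Rightarrow> real" where
  "Lmax m N A = Max ((\<lambda>i. \<Sum>k<m. (A k i)^2) ` {..<N})"

definition supp :: "nat \<Rightarrow> (nat \<Rightarrow> real) \<Rightarrow> nat set" where
  "supp N x = {i. i < N \<and> x i \<noteq> 0}"

definition pos_def_on :: "nat set \<Rightarrow> (nat \<Rightarrow> nat \<Rightarrow> real) \<Rightarrow> bool" where
  "pos_def_on I M = (\<forall>v. (\<exists>i\<in>I. v i \<noteq> 0) \<longrightarrow> (\<Sum>i\<in>I. \<Sum>j\<in>I. v i * M i j * v j) > 0)"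

text \<open>Entries (i,j in I) of A_I^T A_I + lam q (q-1) Lambda(x_I).\<close>
definition hessI :: "nat \<Rightarrow> (nat \<Rightarrow> nat \<Rightarrow> real) \<Rightarrow> real \<Rightarrow> real \<Rightarrow> (nat \<Rightarrow> real) \<Rightarrow> nat \<Rightarrow> nat \<Rightarrow> real" where
  "hessI m A lam q xs i j = (\<Sum>k<m. A k i * A k j)
      + (if i = j then lam * q * (q - 1) * \<bar>xs i\<bar> powr (q - 2) else 0)"

definition strict_local_min :: "nat \<Rightarrow> ((nat \<Rightarrow> real) \<Rightarrow> real) \<Rightarrow> (nat \<Rightarrow> real) \<Rightarrow> bool" where
  "strict_local_min N f xs = (\<exists>\<delta>>0. \<forall>x.
      sqrt (\<Sum>i<N. (x i - xs i)^2) < \<delta> \<and> (\<exists>i<N. x i \<noteq> xs i) \<longrightarrow> f xs < f x)"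

end

theory Submission
  imports Defs
begin

text \<open>At a limit x* every nonzero coordinate satisfies the first-order condition
  A_i^T (A x* - y) + lam q sgn(x*_i) |x*_i|^(q-1) = 0: along the steps updating coordinate i the
  iterates are eventually nonzero, hence satisfy the stationarity equation of the scalar prox
  problem, and that equation passes to the limit. Near x*, the increment T(x* + h) - T(x*) is then
  bounded below by c/8 |h_I|^2, by a second-order expansion on the support in which the positive
  definite matrix absorbs the remainder, plus terms lam |h_j|^q on the zero coordinates, which for
  q < 1 dominate every linear and quadratic contribution of h_j.\<close>

section \<open>The scalar proximal map of lam |.|^q\<close>

definition prox_objective :: "real \<Rightarrow> real \<Rightarrow> real \<Rightarrow> real \<Rightarrow> real \<Rightarrow> real" where
  "prox_objective mu lam q z v = (z - v)^2 / (2*mu) + lam * \<bar>v\<bar> powr q"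

lemma mem_prox_iff:
  "v \<in> prox mu lam q z \<longleftrightarrow> (\<forall>w. prox_objective mu lam q z v \<le> prox_objective mu lam q z w)"
  by (simp add: prox_def prox_objective_def)

lemma has_real_derivative_abs_powr:
  assumes "v \<noteq> 0"
  shows "((\<lambda>u. \<bar>u\<bar> powr q) has_real_derivative q * sgn v * \<bar>v\<bar> powr (q - 1)) (at v)"
proof (cases "v > 0")
  case True
  have "((\<lambda>u. u powr q) has_real_derivative q * v powr (q - 1)) (at v)"
    using has_real_derivative_powr[OF True] by simp
  then have "((\<lambda>u. \<bar>u\<bar> powr q) has_real_derivative q * v powr (q - 1)) (at v)"
    by (rule has_field_derivative_transform_within_open[where S="{0<..}"]) (use True in auto)
  with True show ?thesis by simp
next
  case False
  with assms have neg: "v < 0" by simp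
  have "((\<lambda>u. -u) has_real_derivative -1) (at v)"
    by (auto intro!: derivative_eq_intros)
  from DERIV_fun_powr[OF this, of q] neg
  have "((\<lambda>u. (-u) powr q) has_real_derivative - (q * (-v) powr (q - 1))) (at v)"
    by simp
  then have "((\<lambda>u. \<bar>u\<bar> powr q) has_real_derivative - (q * (-v) powr (q - 1))) (at v)"
    by (rule has_field_derivative_transform_within_open[where S="{..<0}"]) (use neg in auto)
  with neg show ?thesis by simp
qed

lemma prox_objective_has_derivative:
  assumes "v \<noteq> 0"
  shows "(prox_objective mu lam q z has_real_derivative
           (v - z) / mu + lam * q * sgn v * \<bar>v\<bar> powr (q - 1)) (at v)"
proof -
  have "((\<lambda>u. (z - u)^2 / (2*mu) + lam * \<bar>u\<bar> powr q) has_real_derivative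
      (of_nat 2 * ((0 - 1) * (z - v)^(2 - Suc 0))) / (2*mu) + lam * (q * sgn v * \<bar>v\<bar> powr (q - 1))) (at v)"
    by (intro DERIV_add DERIV_cmult DERIV_cdivide DERIV_power DERIV_diff DERIV_const DERIV_ident
        has_real_derivative_abs_powr assms)
  moreover have "(of_nat 2 * ((0 - 1) * (z - v)^(2 - Suc 0))) / (2*mu) = (v - z) / mu"
    by (cases "mu = 0") (auto simp: field_simps)
  ultimately show ?thesis
    unfolding prox_objective_def[abs_def] by (simp add: mult.assoc)
qed

lemma prox_nonzero_stationary:
  assumes "mu > 0" "v \<in> prox mu lam q z" "v \<noteq> 0"
  shows "z = v + lam * mu * q * sgn v * \<bar>v\<bar> powr (q - 1)"
proof -
  have "(v - z) / mu + lam * q * sgn v * \<bar>v\<bar> powr (q - 1) = 0"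
    by (rule DERIV_local_min[OF prox_objective_has_derivative[OF assms(3)], of 1])
       (use assms(2) in \<open>auto simp: mem_prox_iff\<close>)
  with assms(1) show ?thesis
    by (simp add: field_simps)
qed

lemma prox_nonzero_same_sign:
  assumes "mu > 0" "lam > 0" "v \<in> prox mu lam q z" "v \<noteq> 0"
  shows "v * z > 0"
proof (rule ccontr)
  assume "\<not> v * z > 0"
  then have vz: "v * z \<le> 0" by simp
  show False
  proof (cases "z = 0")
    case True
    have "prox_objective mu lam q z v \<le> prox_objective mu lam q z 0"
      using assms(3) by (simp add: mem_prox_iff)
    moreover have "prox_objective mu lam q z v > 0"
      using True assms unfolding prox_objective_def by (intro add_pos_pos) auto
    ultimately show False
      using True by (simp add: prox_objective_def)
  next
    case False
    with vz assms(4) have "v * z < 0"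
      by (metis less_eq_real_def mult_eq_0_iff)
    then have "(z + v)^2 < (z - v)^2"
      by (simp add: power2_eq_square algebra_simps)
    with assms(1) have "prox_objective mu lam q z (-v) < prox_objective mu lam q z v"
      by (simp add: prox_objective_def divide_strict_right_mono)
    with assms(3) show False
      by (auto simp: mem_prox_iff not_le[symmetric])
  qed
qed

lemma prox_uminus:
  assumes "v \<in> prox mu lam q z"
  shows "-v \<in> prox mu lam q (-z)"
proof -
  have sym: "prox_objective mu lam q (-z) (-w) = prox_objective mu lam q z w" for w
    by (simp add: prox_objective_def power2_eq_square algebra_simps)
  show ?thesis
    unfolding mem_prox_iff
    by (metis assms mem_prox_iff minus_minus sym)
qed

lemma powr_fixed_point_iff:
  fixes s c q :: real
  assumes s: "s > 0" and c: "c > 0" and q: "q \<noteq> 2"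
  shows "s = c * s powr (q - 1) \<longleftrightarrow> s = c powr (1 / (2 - q))"
proof -
  have inv: "s powr (q - 1) * s powr (1 - q) = 1"
    using s by (simp flip: powr_add)
  have split: "s powr (2 - q) = s * s powr (1 - q)"
    using s powr_add[of s 1 "1 - q"] by simp
  have "s = c * s powr (q - 1) \<longleftrightarrow> s * s powr (1 - q) = c * (s powr (q - 1) * s powr (1 - q))"
    using s by (auto simp: mult.assoc)
  also have "\<dots> \<longleftrightarrow> s powr (2 - q) = c"
    by (simp only: inv split mult_1_right)
  also have "\<dots> \<longleftrightarrow> s = c powr (1 / (2 - q))"
  proof
    assume "s powr (2 - q) = c"
    then have "c powr (1 / (2 - q)) = s powr ((2 - q) * (1 / (2 - q)))"
      by (metis powr_powr)
    with q s show "s = c powr (1 / (2 - q))" by simp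
  next
    assume "s = c powr (1 / (2 - q))"
    then have "s powr (2 - q) = c powr (1 / (2 - q) * (2 - q))"
      by (metis powr_powr)
    with q c show "s powr (2 - q) = c" by simp
  qed
  finally show ?thesis .
qed

lemma tau_eq_eta: "tau mu lam q = (2 - q) / (2 - 2*q) * eta mu lam q"
  by (simp add: tau_def eta_def)

text \<open>Equal objective values at 0 and v, together with the stationarity equation for v,
  force |v| = eta.\<close>
lemma prox_zero_and_nonzero_imp_tau:
  assumes mu: "mu > 0" and lam: "lam > 0" and q0: "0 < q" and q1: "q < 1"
    and v: "v \<in> prox mu lam q z" "v \<noteq> 0" and zero: "0 \<in> prox mu lam q z"
  shows "\<bar>z\<bar> = tau mu lam q"
proof -
  define s where "s = \<bar>v\<bar>"
  define a where "a = lam * mu * s powr (q - 1)"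
  have s0: "s > 0" using v(2) by (simp add: s_def)
  have a0: "a > 0" using mu lam s0 by (simp add: a_def)
  have sgn2: "(sgn v)^2 = 1" using v(2) by (simp add: sgn_if)
  have vs: "v = sgn v * s" by (simp add: s_def sgn_mult_abs)
  have z: "z = sgn v * (s + q * a)"
    using prox_nonzero_stationary[OF mu v] vs unfolding a_def s_def
    by (simp add: algebra_simps)
  have "prox_objective mu lam q z v = prox_objective mu lam q z 0"
    using v(1) zero by (auto simp: mem_prox_iff intro: antisym)
  then have "(z - v)^2 + 2 * (mu * lam * s powr q) = z^2"
    using mu by (simp add: prox_objective_def s_def field_simps)
  moreover have "mu * lam * s powr q = a * s"
    using s0 powr_add[of s 1 "q - 1"] by (simp add: a_def)
  moreover have "(z - v)^2 = (q * a)^2"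
    using z vs sgn2 by (simp add: power_mult_distrib algebra_simps)
  moreover have "z^2 = (s + q * a)^2"
    using z sgn2 by (simp add: power_mult_distrib)
  ultimately have "(q * a)^2 + 2 * a * s = (s + q * a)^2"
    by simp
  then have "s * s = s * (2 * a * (1 - q))"
    by (simp add: power2_eq_square algebra_simps)
  then have sa: "s = 2 * a * (1 - q)"
    using s0 by simp
  then have "s = 2 * lam * mu * (1 - q) * s powr (q - 1)"
    by (simp add: a_def algebra_simps)
  then have "s = eta mu lam q"
    using powr_fixed_point_iff[OF s0, of "2 * lam * mu * (1 - q)" q] mu lam q1
    by (simp add: eta_def)
  moreover have "\<bar>z\<bar> = s + q * a"
    using z a0 s0 q0 v(2) by (simp add: abs_mult)
  moreover have "s + q * a = (2 - q) / (2 - 2*q) * s"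
  proof -
    have "(2 - q) * s = (2 - 2*q) * (s + q * a)"
      unfolding sa by (simp add: algebra_simps)
    then have "(2 - q) / (2 - 2*q) * s = (2 - 2*q) * (s + q * a) / (2 - 2*q)"
      by simp
    with q1 show ?thesis by simp
  qed
  ultimately show ?thesis
    by (simp add: tau_eq_eta)
qed

text \<open>On (0,\<infinity>) the derivative d of the prox objective is strictly convex (its derivative e is
  increasing). Two positive minimizers a < b are zeros of d, so d < 0 strictly between them,
  which would make the objective at b smaller than at a.\<close>
lemma prox_positive_unique:
  assumes mu: "mu > 0" and lam: "lam > 0" and q0: "0 < q" and q1: "q < 1"
    and a: "a \<in> prox mu lam q z" "a > 0" and b: "b \<in> prox mu lam q z" "b > 0"
  shows "a = b"
proof -
  define d where "d u = (u - z) / mu + lam * q * u powr (q - 1)" for u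
  define e where "e u = 1 / mu + lam * q * (q - 1) * u powr (q - 2)" for u
  have d_deriv: "(d has_real_derivative e t) (at t)" if "t > 0" for t
  proof -
    have "((\<lambda>u. (u - z) / mu + lam * q * u powr (q - 1)) has_real_derivative
        (1 - 0) / mu + lam * q * ((q - 1) * t powr (q - 1 - 1))) (at t)"
      by (intro DERIV_add DERIV_cmult DERIV_cdivide DERIV_diff DERIV_const DERIV_ident
          has_real_derivative_powr that)
    then show ?thesis
      unfolding d_def[abs_def] e_def by (simp add: algebra_simps)
  qed
  have e_strict_mono: "e s < e t" if "0 < s" "s < t" for s t
  proof -
    have "t powr (q - 2) < s powr (q - 2)"
      using that q1 by (intro powr_less_mono2_neg) auto
    moreover have "lam * q * (q - 1) < 0"
      using lam q0 q1 by (simp add: mult_pos_neg)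
    ultimately show ?thesis
      unfolding e_def by (simp add: mult_less_cancel_left_neg)
  qed
  have d_zero: "d v = 0" if "v \<in> prox mu lam q z" "v > 0" for v
    using prox_nonzero_stationary[OF mu that(1)] that(2) mu
    by (simp add: d_def field_simps)
  have obj_deriv: "(prox_objective mu lam q z has_real_derivative d t) (at t)" if "t > 0" for t
    using prox_objective_has_derivative[of t mu lam q z] that by (simp add: d_def)
  have no_smaller: False if "u \<in> prox mu lam q z" "v \<in> prox mu lam q z" "0 < u" "u < v" for u v
  proof -
    have d_neg: "d t < 0" if "u < t" "t < v" for t
    proof (rule ccontr)
      assume "\<not> d t < 0"
      obtain t1 where t1: "u < t1" "t1 < t" "d t - d u = (t - u) * e t1"
        using MVT2[of u t d e] \<open>u < t\<close> \<open>0 < u\<close> d_deriv by auto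
      obtain t2 where t2: "t < t2" "t2 < v" "d v - d t = (v - t) * e t2"
        using MVT2[of t v d e] \<open>t < v\<close> \<open>u < t\<close> \<open>0 < u\<close> d_deriv by auto
      have "0 \<le> (t - u) * e t1"
        using t1 d_zero[OF \<open>u \<in> _\<close> \<open>0 < u\<close>] \<open>\<not> d t < 0\<close> by simp
      then have "0 \<le> e t1"
        using \<open>u < t\<close> by (simp add: zero_le_mult_iff)
      moreover have "(v - t) * e t2 \<le> 0"
        using t2 d_zero[OF \<open>v \<in> _\<close>] \<open>\<not> d t < 0\<close> \<open>0 < u\<close> \<open>u < v\<close> by simp
      then have "e t2 \<le> 0"
        using \<open>t < v\<close> by (simp add: mult_le_0_iff)
      moreover have "e t1 < e t2"
        using e_strict_mono t1 t2 \<open>0 < u\<close> by simp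
      ultimately show False by simp
    qed
    obtain t where t: "u < t" "t < v"
      "prox_objective mu lam q z v - prox_objective mu lam q z u = (v - u) * d t"
      using MVT2[of u v "prox_objective mu lam q z" d] \<open>u < v\<close> \<open>0 < u\<close> obj_deriv by auto
    have "(v - u) * d t < 0"
      using d_neg[OF t(1,2)] \<open>u < v\<close> by (simp add: mult_pos_neg)
    moreover have "prox_objective mu lam q z u \<le> prox_objective mu lam q z v"
      using \<open>u \<in> _\<close> by (simp add: mem_prox_iff)
    ultimately show False
      using t(3) by simp
  qed
  show ?thesis
    using no_smaller[OF a(1) b(1) a(2)] no_smaller[OF b(1) a(1) b(2)] by fastforce
qed

lemma prox_nonempty:
  assumes mu: "mu > 0" and lam: "lam > 0" and q0: "0 < q"
  shows "\<exists>v. v \<in> prox mu lam q z"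
proof -
  let ?f = "prox_objective mu lam q z"
  have "continuous_on {-\<bar>z\<bar>..\<bar>z\<bar>} ?f"
    unfolding prox_objective_def[abs_def]
    by (intro continuous_intros continuous_on_powr') (use q0 mu in auto)
  then obtain v where v: "v \<in> {-\<bar>z\<bar>..\<bar>z\<bar>}" and min: "\<forall>w\<in>{-\<bar>z\<bar>..\<bar>z\<bar>}. ?f v \<le> ?f w"
    using continuous_attains_inf[of "{-\<bar>z\<bar>..\<bar>z\<bar>}" ?f] by auto
  have "?f v \<le> ?f w" for w
  proof (cases "\<bar>w\<bar> \<le> \<bar>z\<bar>")
    case True
    with min show ?thesis by (auto simp: abs_le_iff)
  next
    case False
    have "?f v \<le> ?f z"
      using min by (auto simp: abs_if)
    also have "\<dots> = lam * \<bar>z\<bar> powr q"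
      by (simp add: prox_objective_def)
    also have "\<dots> \<le> lam * \<bar>w\<bar> powr q"
      using False lam q0 by (intro mult_left_mono powr_mono2) auto
    also have "\<dots> \<le> ?f w"
      using mu by (simp add: prox_objective_def)
    finally show ?thesis .
  qed
  then show ?thesis
    by (auto simp: mem_prox_iff)
qed

lemma prox_unique:
  assumes mu: "mu > 0" and lam: "lam > 0" and q0: "0 < q" and q1: "q < 1"
    and z: "\<bar>z\<bar> \<noteq> tau mu lam q"
    and a: "a \<in> prox mu lam q z" and b: "b \<in> prox mu lam q z"
  shows "a = b"
proof (cases "a = 0 \<or> b = 0")
  case True
  then show ?thesis
    using prox_zero_and_nonzero_imp_tau[OF mu lam q0 q1] a b z by metis
next
  case False
  then have "a * z > 0" "b * z > 0"
    using prox_nonzero_same_sign[OF mu lam] a b by auto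
  then consider "a > 0" "b > 0" | "-a > 0" "-b > 0"
    by (fastforce simp: zero_less_mult_iff)
  then show ?thesis
  proof cases
    case 1
    then show ?thesis using prox_positive_unique[OF mu lam q0 q1] a b by blast
  next
    case 2
    then have "-a = -b"
      using prox_positive_unique[OF mu lam q0 q1] prox_uminus[OF a] prox_uminus[OF b] by blast
    then show ?thesis by simp
  qed
qed

lemma Top_mem_prox:
  assumes mu: "mu > 0" and lam: "lam > 0" and q0: "0 < q" and q1: "q < 1"
    and z: "\<bar>z\<bar> \<noteq> tau mu lam q"
  shows "Top mu lam q z w \<in> prox mu lam q z"
proof -
  have "\<exists>!v. v \<in> prox mu lam q z"
    using prox_nonempty[OF mu lam q0] prox_unique[OF mu lam q0 q1 z] by blast
  then have "(THE v. v \<in> prox mu lam q z) \<in> prox mu lam q z"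
    by (rule theI')
  with z show ?thesis
    by (simp add: Top_def)
qed

text \<open>At the threshold |z| = tau the value sgn z * eta chosen by Top is the nonzero minimizer, so it
  satisfies the same stationarity equation as in the generic case.\<close>
lemma Top_nonzero_stationary:
  assumes mu: "mu > 0" and lam: "lam > 0" and q0: "0 < q" and q1: "q < 1"
    and w: "w \<noteq> 0" and v: "Top mu lam q z w \<noteq> 0"
  shows "z = Top mu lam q z w
           + lam * mu * q * sgn (Top mu lam q z w) * \<bar>Top mu lam q z w\<bar> powr (q - 1)"
proof (cases "\<bar>z\<bar> = tau mu lam q")
  case False
  then show ?thesis
    using prox_nonzero_stationary[OF mu Top_mem_prox[OF mu lam q0 q1 False] v] by simp
next
  case True
  define c where "c = 2 * lam * mu * (1 - q)"
  define e where "e = eta mu lam q"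
  have c0: "c > 0" using lam mu q1 by (simp add: c_def)
  have e0: "e > 0" using lam mu q1 by (simp add: e_def eta_def)
  have Top: "Top mu lam q z w = sgn z * e"
    using True w by (simp add: Top_def e_def)
  then have z0: "z \<noteq> 0" using v by auto
  define p where "p = e powr (q - 1)"
  have e_eq: "e = c * p"
    using powr_fixed_point_iff[OF e0 c0, of q] q1 by (simp add: e_def eta_def c_def p_def)
  have "(2 - q) * e = (2 - 2*q) * (e + lam * mu * q * p)"
    unfolding e_eq c_def by (simp add: algebra_simps)
  then have "(2 - q) / (2 - 2*q) * e = (2 - 2*q) * (e + lam * mu * q * p) / (2 - 2*q)"
    by simp
  then have "e + lam * mu * q * e powr (q - 1) = (2 - q) / (2 - 2*q) * e"
    using q1 by (simp add: p_def)
  then have "\<bar>z\<bar> = e + lam * mu * q * e powr (q - 1)"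
    using True by (simp add: tau_eq_eta e_def)
  then have "z = sgn z * (e + lam * mu * q * e powr (q - 1))"
    by (metis sgn_mult_abs)
  moreover have "sgn (sgn z * e) = sgn z" "\<bar>sgn z * e\<bar> = e"
    using z0 e0 by (auto simp: sgn_mult abs_mult)
  ultimately show ?thesis
    unfolding Top by (simp add: algebra_simps)
qed

section \<open>Stationarity of limits of GAITA\<close>

definition lsq_grad :: "nat \<Rightarrow> nat \<Rightarrow> (nat \<Rightarrow> nat \<Rightarrow> real) \<Rightarrow> (nat \<Rightarrow> real) \<Rightarrow> (nat \<Rightarrow> real) \<Rightarrow> nat \<Rightarrow> real"
  where "lsq_grad m N A y x i = (\<Sum>k<m. A k i * ((\<Sum>j<N. A k j * x j) - y k))"

lemma gaita_Suc_updated_coordinate: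
  "gaita m N A y mu lam q x0 (Suc n) (n mod N) =
     Top mu lam q (gaita m N A y mu lam q x0 n (n mod N)
                   - mu * lsq_grad m N A y (gaita m N A y mu lam q x0 n) (n mod N))
         (gaita m N A y mu lam q x0 n (n mod N))"
  by (simp add: Let_def lsq_grad_def)

lemma tendsto_lsq_grad:
  assumes "\<forall>j<N. (\<lambda>n. X n j) \<longlonglongrightarrow> x j"
  shows "(\<lambda>n. lsq_grad m N A y (X n) i) \<longlonglongrightarrow> lsq_grad m N A y x i"
  unfolding lsq_grad_def using assms by (intro tendsto_intros) auto

text \<open>The steps n N + i are exactly those updating coordinate i.\<close>
lemma gaita_limit_stationary:
  assumes N: "N > 0" and lam: "lam > 0" and q0: "0 < q" and q1: "q < 1" and mu: "0 < mu"
    and conv: "\<forall>j<N. (\<lambda>n. gaita m N A y mu lam q x0 n j) \<longlonglongrightarrow> xs j"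
    and i: "i < N" and xi: "xs i \<noteq> 0"
  shows "lsq_grad m N A y xs i + lam * q * sgn (xs i) * \<bar>xs i\<bar> powr (q - 1) = 0"
proof -
  define X where "X = gaita m N A y mu lam q x0"
  define z where "z x = x i - mu * lsq_grad m N A y x i" for x
  define V where "V n = X (Suc (n * N + i)) i" for n
  have "strict_mono (\<lambda>n. n * N + i)" "strict_mono (\<lambda>n. Suc (n * N + i))"
    using N by (auto simp: strict_mono_def)
  then have old: "\<forall>j<N. (\<lambda>n. X (n * N + i) j) \<longlonglongrightarrow> xs j" and new: "V \<longlonglongrightarrow> xs i"
    using conv LIMSEQ_subseq_LIMSEQ[of _ "xs _"] i unfolding X_def V_def comp_def by blast+
  have step: "V n = Top mu lam q (z (X (n * N + i))) (X (n * N + i) i)" for n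
    using gaita_Suc_updated_coordinate[of m N A y mu lam q x0 "n * N + i"] i
    by (simp add: V_def X_def z_def)
  have "\<forall>\<^sub>F n in sequentially. V n \<noteq> 0 \<and> X (n * N + i) i \<noteq> 0"
    using tendsto_imp_eventually_ne[OF new xi] tendsto_imp_eventually_ne[OF old[rule_format, OF i] xi]
    by (rule eventually_conj)
  then have "\<forall>\<^sub>F n in sequentially.
      V n + lam * mu * q * sgn (V n) * \<bar>V n\<bar> powr (q - 1) = z (X (n * N + i))"
    by eventually_elim (use Top_nonzero_stationary[OF mu lam q0 q1] step in metis)
  moreover have "(\<lambda>n. V n + lam * mu * q * sgn (V n) * \<bar>V n\<bar> powr (q - 1))
      \<longlonglongrightarrow> xs i + lam * mu * q * sgn (xs i) * \<bar>xs i\<bar> powr (q - 1)"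
    using xi by (intro tendsto_intros new) auto
  ultimately have "(\<lambda>n. z (X (n * N + i)))
      \<longlonglongrightarrow> xs i + lam * mu * q * sgn (xs i) * \<bar>xs i\<bar> powr (q - 1)"
    by (rule Lim_transform_eventually[rotated])
  moreover have "(\<lambda>n. z (X (n * N + i))) \<longlonglongrightarrow> z xs"
    unfolding z_def using old i by (intro tendsto_intros tendsto_lsq_grad) auto
  ultimately have "z xs = xs i + lam * mu * q * sgn (xs i) * \<bar>xs i\<bar> powr (q - 1)"
    using LIMSEQ_unique by blast
  then have "mu * (lsq_grad m N A y xs i + lam * q * sgn (xs i) * \<bar>xs i\<bar> powr (q - 1)) = 0"
    by (simp add: z_def algebra_simps)
  with mu show ?thesis by simp
qed

section \<open>Local behaviour of |t|^q\<close>

lemma powr_second_order_lower_bound: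
  fixes x q eps :: real
  assumes x: "x > 0" and eps: "eps > 0"
  shows "\<exists>d>0. \<forall>t. \<bar>t\<bar> < d \<longrightarrow>
     q * (q - 1) / 2 * x powr (q - 2) * t^2 - eps * t^2 \<le> (x + t) powr q - x powr q - q * x powr (q - 1) * t"
proof -
  define f2 where "f2 u = q * (q - 1) * u powr (q - 2)" for u
  have "(f2 \<longlongrightarrow> f2 x) (at x)"
    unfolding f2_def using x by (intro tendsto_intros) auto
  from LIM_D[OF this, of "2 * eps"] eps obtain d1 where d1: "d1 > 0"
    "\<And>u. u \<noteq> x \<and> norm (u - x) < d1 \<Longrightarrow> norm (f2 u - f2 x) < 2 * eps"
    by auto
  define d where "d = min d1 (x / 2)"
  define diff where "diff k u = (if k = 0 then u powr q else if k = 1 then q * u powr (q - 1) else f2 u)"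
    for k :: nat and u
  have diff_deriv: "\<forall>k t. k < 2 \<and> x / 2 \<le> t \<and> t \<le> 3 * x / 2 \<longrightarrow> DERIV (diff k) t :> diff (Suc k) t"
  proof (intro allI impI)
    fix k :: nat and t :: real
    assume kt: "k < 2 \<and> x / 2 \<le> t \<and> t \<le> 3 * x / 2"
    then have t: "t > 0" using x by simp
    have "((\<lambda>u. q * u powr (q - 1)) has_real_derivative q * ((q - 1) * t powr (q - 1 - 1))) (at t)"
      by (intro DERIV_cmult has_real_derivative_powr t)
    then show "DERIV (diff k) t :> diff (Suc k) t"
      using has_real_derivative_powr[OF t, of q] kt
      by (cases "k = 0") (auto simp: diff_def[abs_def] f2_def algebra_simps less_2_cases_iff)
  qed
  show ?thesis
  proof (intro exI[of _ d] conjI allI impI)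
    show "d > 0" using d1 x by (simp add: d_def)
    fix t assume t: "\<bar>t\<bar> < d"
    show "q * (q - 1) / 2 * x powr (q - 2) * t^2 - eps * t^2 \<le> (x + t) powr q - x powr q - q * x powr (q - 1) * t"
    proof (cases "t = 0")
      case True
      then show ?thesis by simp
    next
      case False
      have "x / 2 \<le> x + t" "x + t \<le> 3 * x / 2"
        using t by (auto simp: d_def abs_less_iff)
      then obtain s where s: "if x + t < x then x + t < s \<and> s < x else x < s \<and> s < x + t"
        "(x + t) powr q = (\<Sum>k<2. diff k x / fact k * (x + t - x)^k) + diff 2 s / fact 2 * (x + t - x)^2"
        using Taylor[of 2 diff "\<lambda>u. u powr q" "x / 2" "3 * x / 2" x "x + t", OF _ _ diff_deriv] x False
        by (auto simp: diff_def[abs_def])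
      have "s \<noteq> x \<and> norm (s - x) < d1"
        using s(1) t by (auto simp: d_def split: if_splits)
      then have "f2 x - 2 * eps \<le> f2 s"
        using d1(2) by fastforce
      then have "(f2 x - 2 * eps) / 2 * t^2 \<le> f2 s / 2 * t^2"
        by (intro mult_right_mono divide_right_mono) auto
      moreover have "(x + t) powr q = x powr q + q * x powr (q - 1) * t + f2 s / 2 * t^2"
        using s(2) by (simp add: diff_def numeral_2_eq_2)
      ultimately show ?thesis
        by (simp add: f2_def field_simps)
    qed
  qed
qed

lemma abs_powr_second_order_lower_bound:
  fixes x q eps :: real
  assumes x: "x \<noteq> 0" and eps: "eps > 0"
  shows "\<forall>\<^sub>F t in nhds 0. q * (q - 1) / 2 * \<bar>x\<bar> powr (q - 2) * t^2 - eps * t^2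
           \<le> \<bar>x + t\<bar> powr q - \<bar>x\<bar> powr q - q * sgn x * \<bar>x\<bar> powr (q - 1) * t"
proof -
  obtain d where d: "d > 0" and bound: "\<And>t. \<bar>t\<bar> < d \<Longrightarrow>
     q * (q - 1) / 2 * \<bar>x\<bar> powr (q - 2) * t^2 - eps * t^2
       \<le> (\<bar>x\<bar> + t) powr q - \<bar>x\<bar> powr q - q * \<bar>x\<bar> powr (q - 1) * t"
    using powr_second_order_lower_bound[of "\<bar>x\<bar>" eps q] x eps by auto
  have "q * (q - 1) / 2 * \<bar>x\<bar> powr (q - 2) * t^2 - eps * t^2
           \<le> \<bar>x + t\<bar> powr q - \<bar>x\<bar> powr q - q * sgn x * \<bar>x\<bar> powr (q - 1) * t"
    if t: "\<bar>t\<bar> < min d \<bar>x\<bar>" for t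
  proof (cases "x > 0")
    case True
    with t have "x + t > 0" by auto
    with True show ?thesis using bound[of t] t by simp
  next
    case False
    with x t have "x < 0" "x + t < 0" by auto
    then show ?thesis using bound[of "-t"] t by simp
  qed
  moreover have "min d \<bar>x\<bar> > 0" using d x by simp
  ultimately show ?thesis
    unfolding eventually_nhds_metric dist_real_def by (metis diff_zero)
qed

lemma abs_powr_dominates_near_zero:
  fixes g C lam q :: real
  assumes lam: "lam > 0" and q1: "q < 1"
  shows "\<forall>\<^sub>F t in nhds 0. t \<noteq> 0 \<longrightarrow> g * t + C * t^2 < lam * \<bar>t\<bar> powr q"
proof -
  define K where "K = \<bar>g\<bar> + \<bar>C\<bar> + 1"
  define d where "d = min 1 ((lam / K) powr (1 / (1 - q)))"
  have K: "K > 0" by (simp add: K_def add_nonneg_pos)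
  have "g * t + C * t^2 < lam * \<bar>t\<bar> powr q" if t: "\<bar>t\<bar> < d" "t \<noteq> 0" for t
  proof -
    have "\<bar>t\<bar> powr (1 - q) < ((lam / K) powr (1 / (1 - q))) powr (1 - q)"
      using t q1 by (intro powr_less_mono2) (auto simp: d_def)
    also have "\<dots> = lam / K"
      using lam K q1 by (simp add: powr_powr)
    finally have "K * \<bar>t\<bar> powr (1 - q) * \<bar>t\<bar> powr q < lam * \<bar>t\<bar> powr q"
      using K t(2) by (simp add: field_simps)
    moreover have "\<bar>t\<bar> powr (1 - q) * \<bar>t\<bar> powr q = \<bar>t\<bar>"
      using t(2) by (simp flip: powr_add)
    ultimately have K_bound: "K * \<bar>t\<bar> < lam * \<bar>t\<bar> powr q"
      by (simp add: mult.assoc)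
    have "\<bar>t\<bar> * \<bar>t\<bar> \<le> \<bar>t\<bar> * 1"
      using t by (intro mult_left_mono) (auto simp: d_def)
    then have "t^2 \<le> \<bar>t\<bar>"
      by (simp add: power2_eq_square)
    have "C * t^2 \<le> \<bar>C\<bar> * t^2"
      by (simp add: mult_right_mono)
    also have "\<dots> \<le> \<bar>C\<bar> * \<bar>t\<bar>"
      using \<open>t^2 \<le> \<bar>t\<bar>\<close> by (simp add: mult_left_mono)
    finally have "C * t^2 \<le> \<bar>C\<bar> * \<bar>t\<bar>" .
    moreover have "g * t \<le> \<bar>g\<bar> * \<bar>t\<bar>"
      by (metis abs_ge_self abs_mult)
    ultimately have "g * t + C * t^2 \<le> (\<bar>g\<bar> + \<bar>C\<bar>) * \<bar>t\<bar>"
      by (simp add: distrib_right)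
    also have "\<dots> \<le> K * \<bar>t\<bar>"
      by (simp add: K_def mult_right_mono)
    finally show ?thesis
      using K_bound by linarith
  qed
  moreover have "d > 0"
    using lam K by (simp add: d_def)
  ultimately show ?thesis
    unfolding eventually_nhds_metric dist_real_def by (metis diff_zero)
qed

section \<open>A second-order sufficient condition\<close>

lemma compact_unit_sphere_on:
  assumes "finite I"
  shows "compact {v :: nat \<Rightarrow> real. (\<forall>i. i \<notin> I \<longrightarrow> v i = 0) \<and> (\<Sum>i\<in>I. (v i)^2) = 1}"
    (is "compact ?S")
proof -
  let ?B = "Pi\<^sub>E UNIV (\<lambda>i. if i \<in> I then {-1..1 :: real} else {0})"
  have "compactin (product_topology (\<lambda>i. euclidean) UNIV) ?B"
    by (subst compactin_PiE) auto
  then have "compact ?B"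
    by (simp add: euclidean_product_topology)
  moreover have "closed {v :: nat \<Rightarrow> real. \<forall>i. i \<notin> I \<longrightarrow> v i = 0}"
  proof -
    have "{v :: nat \<Rightarrow> real. \<forall>i. i \<notin> I \<longrightarrow> v i = 0} = (\<Inter>i\<in>-I. {v. v i = 0})"
      by auto
    moreover have "closed {v :: nat \<Rightarrow> real. v i = 0}" for i
      by (intro closed_Collect_eq continuous_on_product_coordinates continuous_on_const)
    ultimately show ?thesis by auto
  qed
  moreover have "closed {v :: nat \<Rightarrow> real. (\<Sum>i\<in>I. (v i)^2) = 1}"
    by (intro closed_Collect_eq continuous_intros continuous_on_product_coordinates)
  moreover have "?S \<subseteq> ?B"
  proof
    fix v assume v: "v \<in> ?S"
    have "\<bar>v i\<bar> \<le> 1" if "i \<in> I" for i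
    proof -
      have "(v i)^2 \<le> (\<Sum>i\<in>I. (v i)^2)"
        using that assms by (intro member_le_sum) auto
      with v show ?thesis
        by (simp add: abs_square_le_1)
    qed
    with v show "v \<in> ?B"
      by (auto simp: PiE_iff abs_le_iff)
  qed
  ultimately have "compact (?B \<inter> ({v. \<forall>i. i \<notin> I \<longrightarrow> v i = 0} \<inter> {v. (\<Sum>i\<in>I. (v i)^2) = 1}))"
    by (intro compact_Int_closed closed_Int) auto
  moreover have "?S = ?B \<inter> ({v. \<forall>i. i \<notin> I \<longrightarrow> v i = 0} \<inter> {v. (\<Sum>i\<in>I. (v i)^2) = 1})"
    using \<open>?S \<subseteq> ?B\<close> by blast
  ultimately show ?thesis
    by simp
qed

lemma pos_def_on_coercive:
  assumes fin: "finite I" and pd: "pos_def_on I H"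
  shows "\<exists>c>0. \<forall>v. c * (\<Sum>i\<in>I. (v i)^2) \<le> (\<Sum>i\<in>I. \<Sum>j\<in>I. v i * H i j * v j)"
proof (cases "I = {}")
  case True
  then show ?thesis by (intro exI[of _ 1]) auto
next
  case False
  then obtain i0 where i0: "i0 \<in> I" by blast
  define S where "S = {v :: nat \<Rightarrow> real. (\<forall>i. i \<notin> I \<longrightarrow> v i = 0) \<and> (\<Sum>i\<in>I. (v i)^2) = 1}"
  define Q where "Q v = (\<Sum>i\<in>I. \<Sum>j\<in>I. v i * H i j * v j)" for v :: "nat \<Rightarrow> real"
  have "(\<Sum>i\<in>I. (if i = i0 then 1 else 0 :: real)^2) = (\<Sum>i\<in>I. if i = i0 then 1 else 0)"
    by (intro sum.cong) auto
  then have "(\<lambda>i. if i = i0 then 1 else 0) \<in> S"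
    using fin i0 by (simp add: S_def)
  then have "S \<noteq> {}" by blast
  moreover have "continuous_on S Q"
    unfolding Q_def
    by (intro continuous_intros continuous_on_subset[OF continuous_on_product_coordinates subset_UNIV])
  ultimately obtain v0 where v0: "v0 \<in> S" and min: "\<And>v. v \<in> S \<Longrightarrow> Q v0 \<le> Q v"
    using continuous_attains_inf[OF compact_unit_sphere_on[OF fin, folded S_def]] by blast
  have "\<exists>i\<in>I. v0 i \<noteq> 0"
  proof (rule ccontr)
    assume "\<not> (\<exists>i\<in>I. v0 i \<noteq> 0)"
    then have "(\<Sum>i\<in>I. (v0 i)^2) = 0" by simp
    with v0 show False by (simp add: S_def)
  qed
  then have c: "Q v0 > 0"
    using pd by (simp add: pos_def_on_def Q_def)
  have "Q v0 * (\<Sum>i\<in>I. (v i)^2) \<le> Q v" for v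
  proof (cases "\<forall>i\<in>I. v i = 0")
    case True
    then show ?thesis by (simp add: Q_def)
  next
    case False
    define r where "r = sqrt (\<Sum>i\<in>I. (v i)^2)"
    have r2: "r^2 = (\<Sum>i\<in>I. (v i)^2)"
      by (simp add: r_def sum_nonneg)
    have "r > 0"
      using False fin by (auto simp: r_def sum_nonneg_eq_0_iff intro!: sum_pos2)
    define u where "u i = (if i \<in> I then v i / r else 0)" for i
    have "(\<Sum>i\<in>I. (u i)^2) = (\<Sum>i\<in>I. (v i)^2) / r^2"
      by (simp add: u_def power_divide sum_divide_distrib)
    with \<open>r > 0\<close> have "u \<in> S"
      by (simp add: S_def u_def flip: r2)
    then have "Q v0 \<le> Q u" by (rule min)
    also have "Q u = Q v / r^2"
      by (simp add: Q_def u_def sum_divide_distrib power2_eq_square)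
    finally show ?thesis
      using \<open>r > 0\<close> by (simp add: pos_le_divide_eq flip: r2)
  qed
  with c show ?thesis
    unfolding Q_def by blast
qed

lemma Tlam_diff:
  "Tlam m N A y lam q (\<lambda>i. xs i + h i) - Tlam m N A y lam q xs =
     (\<Sum>k<m. (\<Sum>j<N. A k j * h j)^2) / 2
     + (\<Sum>i<N. lsq_grad m N A y xs i * h i + lam * (\<bar>xs i + h i\<bar> powr q - \<bar>xs i\<bar> powr q))"
proof -
  define r where "r k = (\<Sum>j<N. A k j * xs j) - y k" for k
  define Ah where "Ah k = (\<Sum>j<N. A k j * h j)" for k
  have residual: "(\<Sum>j<N. A k j * (xs j + h j)) - y k = r k + Ah k" for k
    by (simp add: r_def Ah_def distrib_left sum.distrib)
  have "(\<Sum>k<m. r k * Ah k) = (\<Sum>k<m. \<Sum>j<N. A k j * r k * h j)"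
    by (simp add: Ah_def sum_distrib_left mult_ac)
  also have "\<dots> = (\<Sum>j<N. lsq_grad m N A y xs j * h j)"
    by (subst sum.swap) (simp add: lsq_grad_def r_def sum_distrib_left sum_distrib_right mult_ac)
  finally have cross: "(\<Sum>k<m. r k * Ah k) = (\<Sum>j<N. lsq_grad m N A y xs j * h j)" .
  have "(\<Sum>k<m. (r k + Ah k)^2) = (\<Sum>k<m. (r k)^2) + 2 * (\<Sum>k<m. r k * Ah k) + (\<Sum>k<m. (Ah k)^2)"
    by (simp add: power2_sum sum.distrib sum_distrib_left mult.assoc)
  then show ?thesis
    unfolding Tlam_def residual r_def[symmetric] Ah_def[symmetric] cross
    by (simp add: sum.distrib sum_subtractf sum_distrib_left right_diff_distrib field_simps)
qed

lemma sum_sq_matrix_vector_le: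
  fixes A :: "nat \<Rightarrow> nat \<Rightarrow> real" and h :: "nat \<Rightarrow> real"
  assumes "K \<subseteq> {..<N}"
  shows "(\<Sum>k<m. (\<Sum>j\<in>K. A k j * h j)^2) \<le> (\<Sum>k<m. \<Sum>j<N. (A k j)^2) * (\<Sum>j\<in>K. (h j)^2)"
proof -
  have "(\<Sum>j\<in>K. A k j * h j)^2 \<le> (\<Sum>j<N. (A k j)^2) * (\<Sum>j\<in>K. (h j)^2)" for k
  proof -
    have "(\<Sum>j\<in>K. A k j * h j)^2 \<le> (\<Sum>j\<in>K. (A k j)^2) * (\<Sum>j\<in>K. (h j)^2)"
      by (rule Cauchy_Schwarz_ineq_sum)
    also have "\<dots> \<le> (\<Sum>j<N. (A k j)^2) * (\<Sum>j\<in>K. (h j)^2)"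
      using assms by (intro mult_right_mono sum_mono2 sum_nonneg) auto
    finally show ?thesis .
  qed
  then have "(\<Sum>k<m. (\<Sum>j\<in>K. A k j * h j)^2) \<le> (\<Sum>k<m. (\<Sum>j<N. (A k j)^2) * (\<Sum>j\<in>K. (h j)^2))"
    by (rule sum_mono)
  then show ?thesis
    by (simp add: sum_distrib_right)
qed

lemma sum_sq_add_lower_bound:
  fixes a b :: "'a \<Rightarrow> real"
  assumes "\<theta> > 0"
  shows "(1 - \<theta>) * (\<Sum>k\<in>S. (a k)^2) - (\<Sum>k\<in>S. (b k)^2) / \<theta> \<le> (\<Sum>k\<in>S. (a k + b k)^2)"
proof -
  have "(1 - \<theta>) * (a k)^2 - (b k)^2 / \<theta> \<le> (a k + b k)^2" for k
  proof -
    have "(a k + b k)^2 - ((1 - \<theta>) * (a k)^2 - (b k)^2 / \<theta>) = (\<theta> * a k + b k)^2 / \<theta> + (b k)^2"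
      using assms by (simp add: field_simps power2_eq_square)
    moreover have "(\<theta> * a k + b k)^2 / \<theta> + (b k)^2 \<ge> 0"
      using assms by simp
    ultimately show ?thesis by linarith
  qed
  then show ?thesis
    by (simp add: sum_mono sum_distrib_left sum_divide_distrib flip: sum_subtractf)
qed

lemma hessI_quadratic_form:
  assumes "finite I"
  shows "(\<Sum>i\<in>I. \<Sum>j\<in>I. h i * hessI m A lam q xs i j * h j) =
           (\<Sum>k<m. (\<Sum>j\<in>I. A k j * h j)^2) + (\<Sum>i\<in>I. lam * q * (q - 1) * \<bar>xs i\<bar> powr (q - 2) * (h i)^2)"
proof -
  have "(\<Sum>i\<in>I. \<Sum>j\<in>I. h i * hessI m A lam q xs i j * h j) =
      (\<Sum>i\<in>I. \<Sum>j\<in>I. \<Sum>k<m. A k i * h i * (A k j * h j))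
      + (\<Sum>i\<in>I. \<Sum>j\<in>I. if i = j then lam * q * (q - 1) * \<bar>xs i\<bar> powr (q - 2) * (h i)^2 else 0)"
    by (simp add: hessI_def sum.distrib sum_distrib_left sum_distrib_right algebra_simps power2_eq_square
        if_distrib[of "\<lambda>x. h _ * x"] cong: if_cong)
  also have "(\<Sum>i\<in>I. \<Sum>j\<in>I. \<Sum>k<m. A k i * h i * (A k j * h j)) = (\<Sum>k<m. (\<Sum>j\<in>I. A k j * h j)^2)"
    by (simp add: sum.swap[of _ "{..<m}"] power2_eq_square sum_product)
  finally show ?thesis
    using assms by simp
qed

lemma least_squares_part_lower_bound:
  fixes A :: "nat \<Rightarrow> nat \<Rightarrow> real" and h xs :: "nat \<Rightarrow> real"
  assumes I: "I \<subseteq> {..<N}" and J: "J \<subseteq> {..<N}" "I \<inter> J = {}" and c: "c > 0"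
    and M: "(\<Sum>k<m. \<Sum>j<N. (A k j)^2) \<le> M" "M > 0"
    and coercive: "c * (\<Sum>i\<in>I. (h i)^2) \<le> (\<Sum>i\<in>I. \<Sum>j\<in>I. h i * hessI m A lam q xs i j * h j)"
  shows "c / 4 * (\<Sum>i\<in>I. (h i)^2) - M^2 / c * (\<Sum>j\<in>J. (h j)^2)
           \<le> (\<Sum>k<m. (\<Sum>j\<in>I \<union> J. A k j * h j)^2) / 2
             + (\<Sum>i\<in>I. lam * q * (q - 1) * \<bar>xs i\<bar> powr (q - 2) * (h i)^2) / 2"
proof -
  \<comment> \<open>Young's inequality with weight \<theta> separates the coupling between h_I and h_J.\<close>
  define \<theta> where "\<theta> = c / (2 * M)"
  define AI where "AI k = (\<Sum>j\<in>I. A k j * h j)" for k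
  define AJ where "AJ k = (\<Sum>j\<in>J. A k j * h j)" for k
  define hI2 where "hI2 = (\<Sum>i\<in>I. (h i)^2)"
  define hJ2 where "hJ2 = (\<Sum>j\<in>J. (h j)^2)"
  have \<theta>: "\<theta> > 0" using c M by (simp add: \<theta>_def)
  have "finite I" "finite J" using I J finite_subset by blast+
  then have "(\<Sum>j\<in>I \<union> J. A k j * h j) = AI k + AJ k" for k
    using J(2) by (simp add: AI_def AJ_def sum.union_disjoint)
  then have split: "(\<Sum>k<m. (AI k)^2) - \<theta> * (\<Sum>k<m. (AI k)^2) - (\<Sum>k<m. (AJ k)^2) / \<theta>
      \<le> (\<Sum>k<m. (\<Sum>j\<in>I \<union> J. A k j * h j)^2)"
    using sum_sq_add_lower_bound[OF \<theta>, of AI "{..<m}" AJ] by (simp add: left_diff_distrib)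
  have "(\<Sum>k<m. (AI k)^2) \<le> M * hI2"
    using sum_sq_matrix_vector_le[OF I, where m=m and A=A and h=h] M(1) sum_nonneg[of I "\<lambda>i. (h i)^2"]
    unfolding AI_def hI2_def by (smt (verit) mult_right_mono zero_le_power2)
  then have "\<theta> * (\<Sum>k<m. (AI k)^2) \<le> \<theta> * (M * hI2)"
    using \<theta> by (intro mult_left_mono) auto
  also have "\<dots> = c / 2 * hI2"
    using M by (simp add: \<theta>_def)
  finally have "\<theta> * (\<Sum>k<m. (AI k)^2) \<le> c / 2 * hI2" .
  moreover have "(\<Sum>k<m. (AJ k)^2) \<le> M * hJ2"
    using sum_sq_matrix_vector_le[OF J(1), where m=m and A=A and h=h] M(1) sum_nonneg[of J "\<lambda>i. (h i)^2"]
    unfolding AJ_def hJ2_def by (smt (verit) mult_right_mono zero_le_power2)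
  then have "(\<Sum>k<m. (AJ k)^2) / \<theta> \<le> 2 * M^2 / c * hJ2"
    using \<theta> M c by (simp add: \<theta>_def field_simps power2_eq_square)
  moreover have "c * hI2 \<le> (\<Sum>k<m. (AI k)^2) + (\<Sum>i\<in>I. lam * q * (q - 1) * \<bar>xs i\<bar> powr (q - 2) * (h i)^2)"
    using coercive hessI_quadratic_form[OF \<open>finite I\<close>] by (simp add: AI_def hI2_def)
  ultimately show ?thesis
    using split by (simp add: hI2_def hJ2_def)
qed

lemma Tlam_increment_lower_bound:
  fixes N :: nat and A :: "nat \<Rightarrow> nat \<Rightarrow> real" and y xs h :: "nat \<Rightarrow> real"
  defines "I \<equiv> supp N xs" and "J \<equiv> {..<N} - supp N xs"
  assumes c: "c > 0" and M: "(\<Sum>k<m. \<Sum>j<N. (A k j)^2) \<le> M" "M > 0"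
    and coercive: "c * (\<Sum>i\<in>I. (h i)^2) \<le> (\<Sum>i\<in>I. \<Sum>j\<in>I. h i * hessI m A lam q xs i j * h j)"
    and support_bound: "\<And>i. i \<in> I \<Longrightarrow>
        lam * q * (q - 1) * \<bar>xs i\<bar> powr (q - 2) * (h i)^2 / 2 - c / 8 * (h i)^2
          \<le> lsq_grad m N A y xs i * h i + lam * (\<bar>xs i + h i\<bar> powr q - \<bar>xs i\<bar> powr q)"
  shows "c / 8 * (\<Sum>i\<in>I. (h i)^2)
           + (\<Sum>j\<in>J. lsq_grad m N A y xs j * h j + lam * \<bar>h j\<bar> powr q - M^2 / c * (h j)^2)
         \<le> Tlam m N A y lam q (\<lambda>i. xs i + h i) - Tlam m N A y lam q xs"
proof -
  define \<psi> where "\<psi> i = lsq_grad m N A y xs i * h i + lam * (\<bar>xs i + h i\<bar> powr q - \<bar>xs i\<bar> powr q)"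
    for i
  have IJ: "I \<subseteq> {..<N}" "J \<subseteq> {..<N}" "I \<inter> J = {}" "I \<union> J = {..<N}"
    by (auto simp: I_def J_def supp_def)
  have "finite I" "finite J" using IJ finite_subset by blast+
  have "Tlam m N A y lam q (\<lambda>i. xs i + h i) - Tlam m N A y lam q xs
      = (\<Sum>k<m. (\<Sum>j\<in>I \<union> J. A k j * h j)^2) / 2 + (\<Sum>i\<in>I. \<psi> i) + (\<Sum>j\<in>J. \<psi> j)"
    unfolding Tlam_diff IJ(4)[symmetric] \<psi>_def
    using \<open>finite I\<close> \<open>finite J\<close> IJ(3) by (simp add: sum.union_disjoint)
  moreover have "(\<Sum>j\<in>J. \<psi> j) = (\<Sum>j\<in>J. lsq_grad m N A y xs j * h j + lam * \<bar>h j\<bar> powr q)"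
    by (intro sum.cong) (auto simp: \<psi>_def J_def supp_def)
  moreover have "(\<Sum>i\<in>I. lam * q * (q - 1) * \<bar>xs i\<bar> powr (q - 2) * (h i)^2) / 2 - c / 8 * (\<Sum>i\<in>I. (h i)^2)
      \<le> (\<Sum>i\<in>I. \<psi> i)"
    using sum_mono[of I _ \<psi>, OF support_bound[folded \<psi>_def]]
    by (simp add: sum_subtractf sum_divide_distrib sum_distrib_left mult.assoc)
  moreover have "(\<Sum>j\<in>J. lsq_grad m N A y xs j * h j + lam * \<bar>h j\<bar> powr q - M^2 / c * (h j)^2)
      = (\<Sum>j\<in>J. lsq_grad m N A y xs j * h j + lam * \<bar>h j\<bar> powr q) - M^2 / c * (\<Sum>j\<in>J. (h j)^2)"
    by (simp add: sum_subtractf sum_distrib_left)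
  moreover note least_squares_part_lower_bound[OF IJ(1-3) c M coercive]
  ultimately show ?thesis
    by linarith
qed

lemma stationary_increment_lower_bound:
  fixes x g lam q eps :: real
  assumes x: "x \<noteq> 0" and lam: "lam > 0" and eps: "eps > 0"
    and stationary: "g + lam * q * sgn x * \<bar>x\<bar> powr (q - 1) = 0"
  shows "\<forall>\<^sub>F t in nhds 0. lam * q * (q - 1) * \<bar>x\<bar> powr (q - 2) * t^2 / 2 - eps * t^2
           \<le> g * t + lam * (\<bar>x + t\<bar> powr q - \<bar>x\<bar> powr q)"
proof -
  have "eps / lam > 0" using eps lam by simp
  from abs_powr_second_order_lower_bound[OF x this, of q]
  show ?thesis
  proof (rule eventually_mono)
    fix t
    assume "q * (q - 1) / 2 * \<bar>x\<bar> powr (q - 2) * t^2 - eps / lam * t^2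
      \<le> \<bar>x + t\<bar> powr q - \<bar>x\<bar> powr q - q * sgn x * \<bar>x\<bar> powr (q - 1) * t"
    then have "lam * (q * (q - 1) / 2 * \<bar>x\<bar> powr (q - 2) * t^2 - eps / lam * t^2)
      \<le> lam * (\<bar>x + t\<bar> powr q - \<bar>x\<bar> powr q - q * sgn x * \<bar>x\<bar> powr (q - 1) * t)"
      using lam by (intro mult_left_mono) auto
    moreover have "lam * (q * (q - 1) / 2 * \<bar>x\<bar> powr (q - 2) * t^2 - eps / lam * t^2)
      = lam * q * (q - 1) * \<bar>x\<bar> powr (q - 2) * t^2 / 2 - eps * t^2"
      using lam by (simp add: field_simps)
    moreover have "lam * (\<bar>x + t\<bar> powr q - \<bar>x\<bar> powr q - q * sgn x * \<bar>x\<bar> powr (q - 1) * t)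
      = g * t + lam * (\<bar>x + t\<bar> powr q - \<bar>x\<bar> powr q)"
      using stationary by (simp add: algebra_simps flip: eq_neg_iff_add_eq_0)
    ultimately show "lam * q * (q - 1) * \<bar>x\<bar> powr (q - 2) * t^2 / 2 - eps * t^2
             \<le> g * t + lam * (\<bar>x + t\<bar> powr q - \<bar>x\<bar> powr q)"
      by simp
  qed
qed

lemma coordinatewise_increment_bounds:
  fixes A :: "nat \<Rightarrow> nat \<Rightarrow> real" and y xs :: "nat \<Rightarrow> real"
  assumes lam: "lam > 0" and q1: "q < 1" and eps: "eps > 0"
    and stationary: "\<And>i. i \<in> supp N xs \<Longrightarrow>
          lsq_grad m N A y xs i + lam * q * sgn (xs i) * \<bar>xs i\<bar> powr (q - 1) = 0"
  shows "\<exists>d>0. \<forall>t i. \<bar>t\<bar> < d \<longrightarrow> i < N \<longrightarrow>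
    (i \<in> supp N xs \<longrightarrow> lam * q * (q - 1) * \<bar>xs i\<bar> powr (q - 2) * t^2 / 2 - eps * t^2
        \<le> lsq_grad m N A y xs i * t + lam * (\<bar>xs i + t\<bar> powr q - \<bar>xs i\<bar> powr q))
    \<and> (i \<notin> supp N xs \<longrightarrow> t \<noteq> 0 \<longrightarrow> 0 < lsq_grad m N A y xs i * t + lam * \<bar>t\<bar> powr q - C * t^2)"
proof -
  define g where "g = lsq_grad m N A y xs"
  define P where "P i t \<longleftrightarrow>
      (i \<in> supp N xs \<longrightarrow> lam * q * (q - 1) * \<bar>xs i\<bar> powr (q - 2) * t^2 / 2 - eps * t^2
        \<le> g i * t + lam * (\<bar>xs i + t\<bar> powr q - \<bar>xs i\<bar> powr q))
      \<and> (i \<notin> supp N xs \<longrightarrow> t \<noteq> 0 \<longrightarrow> 0 < g i * t + lam * \<bar>t\<bar> powr q - C * t^2)" for i t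
  have "\<forall>\<^sub>F t in nhds 0. P i t" if "i < N" for i
  proof (cases "i \<in> supp N xs")
    case True
    then show ?thesis
      using stationary_increment_lower_bound[of "xs i" lam eps "g i" q] lam eps stationary
      by (simp add: P_def g_def supp_def)
  next
    case False
    then show ?thesis
      using abs_powr_dominates_near_zero[OF lam q1, of "- g i" C] that
      by (auto simp: P_def supp_def elim!: eventually_mono)
  qed
  then have "\<forall>\<^sub>F t in nhds 0. \<forall>i\<in>{..<N}. P i t"
    by (simp add: eventually_ball_finite)
  then show ?thesis
    unfolding eventually_nhds_metric dist_real_def P_def g_def by auto
qed

lemma weighted_sum_squares_add_pos:
  fixes h f :: "'a \<Rightarrow> real"
  assumes "finite I" "finite J" "c > 0"
    and "\<And>j. j \<in> J \<Longrightarrow> 0 \<le> f j" "\<And>j. j \<in> J \<Longrightarrow> h j \<noteq> 0 \<Longrightarrow> 0 < f j"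
    and "\<exists>i\<in>I \<union> J. h i \<noteq> 0"
  shows "0 < c * (\<Sum>i\<in>I. (h i)^2) + (\<Sum>j\<in>J. f j)"
proof -
  have "0 \<le> (\<Sum>i\<in>I. (h i)^2)" "0 \<le> (\<Sum>j\<in>J. f j)"
    using assms(4) by (auto intro: sum_nonneg)
  moreover have "0 < (\<Sum>i\<in>I. (h i)^2) \<or> 0 < (\<Sum>j\<in>J. f j)"
    using assms(1,2,4-6) by (auto intro: sum_pos2)
  ultimately show ?thesis
    using assms(3) by (auto intro: add_pos_nonneg add_nonneg_pos)
qed

lemma strict_local_min_of_second_order_condition:
  fixes A :: "nat \<Rightarrow> nat \<Rightarrow> real" and y xs :: "nat \<Rightarrow> real"
  assumes lam: "lam > 0" and q1: "q < 1"
    and stationary: "\<And>i. i \<in> supp N xs \<Longrightarrow>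
          lsq_grad m N A y xs i + lam * q * sgn (xs i) * \<bar>xs i\<bar> powr (q - 1) = 0"
    and pd: "pos_def_on (supp N xs) (hessI m A lam q xs)"
  shows "strict_local_min N (Tlam m N A y lam q) xs"
proof -
  define I where "I = supp N xs"
  define J where "J = {..<N} - supp N xs"
  define g where "g = lsq_grad m N A y xs"
  define M where "M = 1 + (\<Sum>k<m. \<Sum>j<N. (A k j)^2)"
  have M: "(\<Sum>k<m. \<Sum>j<N. (A k j)^2) \<le> M" "M > 0"
    by (simp_all add: M_def add_pos_nonneg sum_nonneg)
  obtain c where c: "c > 0"
    and coercive: "\<And>h. c * (\<Sum>i\<in>I. (h i)^2) \<le> (\<Sum>i\<in>I. \<Sum>j\<in>I. h i * hessI m A lam q xs i j * h j)"
    using pos_def_on_coercive[OF _ pd] by (auto simp: I_def supp_def)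
  obtain d where d: "d > 0" and near: "\<And>t i. \<bar>t\<bar> < d \<Longrightarrow> i < N \<Longrightarrow>
      (i \<in> I \<longrightarrow> lam * q * (q - 1) * \<bar>xs i\<bar> powr (q - 2) * t^2 / 2 - c / 8 * t^2
        \<le> g i * t + lam * (\<bar>xs i + t\<bar> powr q - \<bar>xs i\<bar> powr q))
      \<and> (i \<notin> I \<longrightarrow> t \<noteq> 0 \<longrightarrow> 0 < g i * t + lam * \<bar>t\<bar> powr q - M^2 / c * t^2)"
    using coordinatewise_increment_bounds[OF lam q1 _ stationary, of "c / 8" "M^2 / c"] c
    unfolding I_def g_def by auto
  show ?thesis
    unfolding strict_local_min_def
  proof (intro exI[of _ d] conjI allI impI d)
    fix x
    assume x: "sqrt (\<Sum>i<N. (x i - xs i)^2) < d \<and> (\<exists>i<N. x i \<noteq> xs i)"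
    define h where "h i = x i - xs i" for i
    have small: "\<bar>h i\<bar> < d" if "i < N" for i
    proof -
      have "\<bar>h i\<bar> \<le> L2_set (\<lambda>i. \<bar>h i\<bar>) {..<N}"
        using that by (intro member_le_L2_set) auto
      with x show ?thesis
        by (simp add: L2_set_def h_def)
    qed
    have J_pos: "0 < g j * h j + lam * \<bar>h j\<bar> powr q - M^2 / c * (h j)^2" if "j \<in> J" "h j \<noteq> 0" for j
      using near[OF small] that by (auto simp: J_def I_def)
    have J_nonneg: "0 \<le> g j * h j + lam * \<bar>h j\<bar> powr q - M^2 / c * (h j)^2" if "j \<in> J" for j
      using J_pos[OF that] by (cases "h j = 0") auto
    have "\<exists>i\<in>I \<union> J. h i \<noteq> 0"
      using x by (auto simp: h_def I_def J_def)
    then have "0 < c / 8 * (\<Sum>i\<in>I. (h i)^2)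
                 + (\<Sum>j\<in>J. g j * h j + lam * \<bar>h j\<bar> powr q - M^2 / c * (h j)^2)"
      using c J_nonneg J_pos by (intro weighted_sum_squares_add_pos) (auto simp: I_def J_def supp_def)
    also have "\<dots> \<le> Tlam m N A y lam q (\<lambda>i. xs i + h i) - Tlam m N A y lam q xs"
      using Tlam_increment_lower_bound[OF c M] coercive near[OF small] by (simp add: I_def J_def g_def supp_def)
    finally show "Tlam m N A y lam q xs < Tlam m N A y lam q x"
      by (simp add: h_def)
  qed
qed

text \<open>The step-size bound mu * Lmax < 1 is only needed for the convergence of GAITA, which is
  assumed here.\<close>
theorem theorem5:
  fixes m N :: nat and A :: "nat \<Rightarrow> nat \<Rightarrow> real" and y x0 xs :: "nat \<Rightarrow> real"
    and lam q mu :: real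
  assumes "N > 0" and "lam > 0" and "0 < q" and "q < 1"
    and "0 < mu" and "mu * Lmax m N A < 1"
    and "\<forall>i<N. (\<lambda>n. gaita m N A y mu lam q x0 n i) \<longlonglongrightarrow> xs i"
    and "pos_def_on (supp N xs) (hessI m A lam q xs)"
  shows "strict_local_min N (Tlam m N A y lam q) xs"
proof (rule strict_local_min_of_second_order_condition[OF assms(2,4) _ assms(8)])
  fix i
  assume "i \<in> supp N xs"
  then show "lsq_grad m N A y xs i + lam * q * sgn (xs i) * \<bar>xs i\<bar> powr (q - 1) = 0"
    using gaita_limit_stationary[OF assms(1-5,7)] by (simp add: supp_def)
qed

end
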